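(* Let $S\subset\mathbb{C}^4$ be the surface parametrized by $(a,t)\mapsto(a,t^4,at^6,t^7)$. Then $S$ is Whitney regular along its singular locus (the first coordinate axis). However, the surface parametrized by $\tau(a,t)=(a,t^4,at^2,t^3)$ (which is the blow-up of $S$ along its singular locus) and the surface parametrized by $\sigma(a,t)=(a,t^4,\tfrac32at^2,\tfrac74t^3)$ (which is the Nash modification of $S$) are not Whitney regular along their singular locus, the first coordinate axis.
   Context: Whitney regularity along the singular locus $\mathcal{C}$ at $0$: for all sequences $x_n\in S\setminus\mathcal{C}$, $y_n\in\mathcal{C}\setminus\{0\}$ converging to $0$ with secants $\overline{x_ny_n}\to l$ and tangent planes $T_{x_n}S\to T$, one has $T_0\mathcal{C}\subset T$ and $l\subset T$. *)

theory Defs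
  imports "HOL-Analysis.Analysis"
begin

text \<open>Points of C^4 are vectors of type complex^4; complex scalar multiplication is
  the componentwise product (*s), and complex linear algebra is the library
  interpretation vec (vec.span, vec.subspace, vec.dim).\<close>

definition vec4 :: "complex \<Rightarrow> complex \<Rightarrow> complex \<Rightarrow> complex \<Rightarrow> complex ^ 4" where
  "vec4 x1 x2 x3 x4 = (\<chi> i. if i = 1 then x1 else if i = 2 then x2 else if i = 3 then x3 else x4)"

definition first_axis :: "(complex ^ 4) set" where
  "first_axis = {x. x $ 2 = 0 \<and> x $ 3 = 0 \<and> x $ 4 = 0}"

definition is_cgrass :: "nat \<Rightarrow> (complex ^ 4) set \<Rightarrow> bool" where
  "is_cgrass k V \<longleftrightarrow> vec.subspace V \<and> vec.dim V = k"

definition gap :: "(complex ^ 4) set \<Rightarrow> (complex ^ 4) set \<Rightarrow> real" where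
  "gap M N = (SUP v \<in> M \<inter> cball 0 1. infdist v N)"

text \<open>Convergence of subspaces in the Grassmannian (gap / Hausdorff metric on unit balls).\<close>
definition subspace_tendsto :: "(nat \<Rightarrow> (complex ^ 4) set) \<Rightarrow> (complex ^ 4) set \<Rightarrow> bool" where
  "subspace_tendsto V W \<longleftrightarrow>
     (\<lambda>n. gap (V n) W) \<longlonglongrightarrow> 0 \<and> (\<lambda>n. gap W (V n)) \<longlonglongrightarrow> 0"

definition d_a :: "(complex \<Rightarrow> complex \<Rightarrow> complex ^ 4) \<Rightarrow> complex \<Rightarrow> complex \<Rightarrow> complex ^ 4" where
  "d_a phi a t = (\<chi> i. deriv (\<lambda>s. phi s t $ i) a)"

definition d_t :: "(complex \<Rightarrow> complex \<Rightarrow> complex ^ 4) \<Rightarrow> complex \<Rightarrow> complex \<Rightarrow> complex ^ 4" where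
  "d_t phi a t = (\<chi> i. deriv (\<lambda>s. phi a s $ i) t)"

definition tangent_plane :: "(complex \<Rightarrow> complex \<Rightarrow> complex ^ 4) \<Rightarrow> complex \<Rightarrow> complex \<Rightarrow> (complex ^ 4) set" where
  "tangent_plane phi a t = vec.span {d_a phi a t, d_t phi a t}"

text \<open>Whitney regularity at 0 along the first coordinate axis C of the surface
  S = phi(C^2), where S minus C is exactly phi({t \<noteq> 0}) (phi injective there).
  Sequences x_n in S - C are written x_n = phi(a_n, t_n), t_n \<noteq> 0.
  Note T_0 C = C since C is a linear subspace.\<close>
definition whitney_regular_at_0 :: "(complex \<Rightarrow> complex \<Rightarrow> complex ^ 4) \<Rightarrow> bool" where
  "whitney_regular_at_0 phi \<longleftrightarrow>
    (\<forall>(a::nat \<Rightarrow> complex) (t::nat \<Rightarrow> complex) (y::nat \<Rightarrow> complex ^ 4) l T.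
       (\<forall>n. t n \<noteq> 0) \<longrightarrow> (\<lambda>n. phi (a n) (t n)) \<longlonglongrightarrow> 0 \<longrightarrow>
       (\<forall>n. y n \<in> first_axis - {0}) \<longrightarrow> y \<longlonglongrightarrow> 0 \<longrightarrow>
       is_cgrass 1 l \<longrightarrow> subspace_tendsto (\<lambda>n. vec.span {phi (a n) (t n) - y n}) l \<longrightarrow>
       is_cgrass 2 T \<longrightarrow> subspace_tendsto (\<lambda>n. tangent_plane phi (a n) (t n)) T \<longrightarrow>
       first_axis \<subseteq> T \<and> l \<subseteq> T)"

end

theory Submission
  imports Defs
begin

(* For S, the tangent planes contain d_a = (1,0,t^6,0) and d_t / (4t^3) = (0,1,3/2 a t^2, 7/4 t^3),
   which tend to e1 and e2; on a secant the third and fourth coordinates are a t^2 and t^3 times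
   the second one.  Hence every limit tangent plane contains the (x1,x2)-plane, and every limit
   secant lies in it.

   Both other surfaces belong to the family (a, t^4, p a t^2, q t^3) with p, q nonzero.  Along
   a = t -> 0 and y = (t,0,0,0) the secant lines tend to span (0,0,p/q,1), while the tangent
   planes tend to span {e1, (0,0,2p/(3q),1)}, which does not contain that line. *)

lemma vec4_nth [simp]:
  "vec4 a b c d $ 1 = a" "vec4 a b c d $ 2 = b" "vec4 a b c d $ 3 = c" "vec4 a b c d $ 4 = d"
  by (simp_all add: vec4_def)

lemma vec4_eq_iff: "vec4 a b c d = vec4 a' b' c' d' \<longleftrightarrow> a = a' \<and> b = b' \<and> c = c' \<and> d = d'"
  by (simp add: vec_eq_iff forall_4)

lemma vec4_ops [simp]:
  "vec4 a b c d + vec4 a' b' c' d' = vec4 (a + a') (b + b') (c + c') (d + d')"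
  "vec4 a b c d - vec4 a' b' c' d' = vec4 (a - a') (b - b') (c - c') (d - d')"
  "k *s vec4 a b c d = vec4 (k * a) (k * b) (k * c) (k * d)"
  by (simp_all add: vec_eq_iff forall_4)

lemma vec4_zero: "(0::complex^4) = vec4 0 0 0 0"
  by (simp add: vec_eq_iff forall_4)

lemma tendsto_vec4:
  assumes "f1 \<longlonglongrightarrow> x1" "f2 \<longlonglongrightarrow> x2" "f3 \<longlonglongrightarrow> x3" "f4 \<longlonglongrightarrow> x4"
  shows "(\<lambda>n. vec4 (f1 n) (f2 n) (f3 n) (f4 n)) \<longlonglongrightarrow> vec4 x1 x2 x3 x4"
  unfolding vec4_def by (rule tendsto_vec_lambda) (auto intro: assms)

lemma norm_smult_complex: "norm (c *s x) = norm c * norm (x :: complex ^ 'n)"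
  unfolding norm_vec_def by (simp add: norm_mult L2_set_right_distrib)

(* Real scaling is a special case of complex scaling, so complex subspaces are real subspaces
   and hence closed. *)
lemma smult_of_real: "complex_of_real r *s x = r *\<^sub>R (x :: complex ^ 'n)"
proof (rule vec_eq_iff[THEN iffD2], rule allI)
  fix i show "(complex_of_real r *s x) $ i = (r *\<^sub>R x) $ i"
    unfolding vector_smult_component vector_scaleR_component by (simp add: scaleR_conv_of_real)
qed

lemma subspace_scaleR: "vec.subspace T \<Longrightarrow> x \<in> T \<Longrightarrow> r *\<^sub>R (x :: complex ^ 'n) \<in> T"
  by (metis smult_of_real vec.subspace_scale)

lemma subspace_closed: "vec.subspace (T :: (complex ^ 'n) set) \<Longrightarrow> closed T"
  by (rule closed_subspace) (auto simp: subspace_def vec.subspace_0 vec.subspace_add subspace_scaleR)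

lemma span_pair: "v \<in> vec.span {x, y} \<longleftrightarrow> (\<exists>\<alpha> \<beta>. v = \<alpha> *s x + \<beta> *s (y :: complex ^ 'n))"
  by (auto simp: vec.span_insert vec.span_singleton algebra_simps)

lemma infdist_le_gap:
  assumes "0 \<in> N" "v \<in> M" "norm v \<le> 1"
  shows "infdist v N \<le> gap M N"
  unfolding gap_def
proof (rule cSUP_upper)
  show "v \<in> M \<inter> cball 0 1" using assms(2,3) by simp
  have "infdist x N \<le> 1" if "x \<in> cball 0 1" for x
    using infdist_le[OF assms(1), of x] that by (simp add: dist_commute)
  then show "bdd_above ((\<lambda>v. infdist v N) ` (M \<inter> cball 0 1))"
    by (auto intro: bdd_aboveI[where M = 1])
qed

lemma gap_tendsto_zero:
  assumes M: "\<And>n. vec.subspace (M n)" and N: "\<And>n. vec.subspace (N n)"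
    and close: "\<And>n v. v \<in> M n \<Longrightarrow> \<exists>P \<in> N n. dist v P \<le> B n * norm v"
    and B_nonneg: "\<And>n. 0 \<le> B n" and B_lim: "B \<longlonglongrightarrow> 0"
  shows "(\<lambda>n. gap (M n) (N n)) \<longlonglongrightarrow> 0"
proof (rule real_tendsto_sandwich[where f = "\<lambda>_. 0" and h = B])
  have "0 \<le> gap (M n) (N n)" for n
  proof -
    have "infdist 0 (N n) \<le> gap (M n) (N n)"
      by (rule infdist_le_gap[OF vec.subspace_0[OF N] vec.subspace_0[OF M]]) simp
    then show ?thesis using infdist_nonneg[of 0 "N n"] by linarith
  qed
  then show "\<forall>\<^sub>F n in sequentially. 0 \<le> gap (M n) (N n)" by simp
  have "gap (M n) (N n) \<le> B n" for n
    unfolding gap_def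
  proof (rule cSUP_least)
    have "0 \<in> M n \<inter> cball 0 1" using vec.subspace_0[OF M] by simp
    then show "M n \<inter> cball 0 1 \<noteq> {}" by blast
    fix v assume v: "v \<in> M n \<inter> cball 0 1"
    then obtain P where P: "P \<in> N n" "dist v P \<le> B n * norm v" using close by blast
    have "B n * norm v \<le> B n" using v B_nonneg[of n] by (simp add: mult_left_le)
    then show "infdist v (N n) \<le> B n" using P by (meson infdist_le2 order.trans)
  qed
  then show "\<forall>\<^sub>F n in sequentially. gap (M n) (N n) \<le> B n" by simp
  show "(\<lambda>n. 0) \<longlonglongrightarrow> 0" "B \<longlonglongrightarrow> 0" by (simp_all add: B_lim)
qed

lemma shrink_to_unit_ball: "0 < 1 / (norm w + 1)" "norm ((1 / (norm w + 1)) *\<^sub>R w) < 1"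
proof -
  have pos: "0 < norm w + 1" using norm_ge_zero[of w] by linarith
  then show "0 < 1 / (norm w + 1)" by simp
  show "norm ((1 / (norm w + 1)) *\<^sub>R w) < 1" using pos by (simp add: divide_less_eq)
qed

lemma subspace_limit_contains_limits:
  assumes lim: "subspace_tendsto V L" and L: "vec.subspace L" and V: "\<And>n. vec.subspace (V n)"
    and v: "\<And>n. v n \<in> V n" "v \<longlonglongrightarrow> w"
  shows "w \<in> L"
proof -
  define r where "r = 1 / (norm w + 1)"
  have r: "0 < r" "norm (r *\<^sub>R w) < 1" unfolding r_def by (rule shrink_to_unit_ball)+
  have rv: "(\<lambda>n. r *\<^sub>R v n) \<longlonglongrightarrow> r *\<^sub>R w" by (intro tendsto_intros v)
  then have "\<forall>\<^sub>F n in sequentially. norm (r *\<^sub>R v n) < 1"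
    using r(2) by (rule order_tendstoD[OF tendsto_norm])
  then have "\<forall>\<^sub>F n in sequentially. infdist (r *\<^sub>R v n) L \<le> gap (V n) L"
    by eventually_elim (intro infdist_le_gap vec.subspace_0 L subspace_scaleR V v, simp)
  moreover have "(\<lambda>n. gap (V n) L) \<longlonglongrightarrow> 0" using lim by (simp add: subspace_tendsto_def)
  ultimately have "infdist (r *\<^sub>R w) L \<le> 0"
    using tendsto_le[OF trivial_limit_sequentially _ tendsto_infdist[OF rv]] by blast
  then have "r *\<^sub>R w \<in> L"
    using in_closed_iff_infdist_zero[OF subspace_closed[OF L]] vec.subspace_0[OF L]
    by (metis empty_iff infdist_nonneg order_antisym)
  then have "(1 / r) *\<^sub>R (r *\<^sub>R w) \<in> L" by (rule subspace_scaleR[OF L])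
  then show ?thesis using r(1) by simp
qed

lemma subspace_limit_approximable:
  assumes lim: "subspace_tendsto V L" and L: "vec.subspace L" and V: "\<And>n. vec.subspace (V n)"
    and w: "w \<in> L"
  obtains u where "\<And>n. u n \<in> V n" "u \<longlonglongrightarrow> w"
proof -
  define r where "r = 1 / (norm w + 1)"
  have r: "0 < r" "norm (r *\<^sub>R w) < 1" unfolding r_def by (rule shrink_to_unit_ball)+
  have "\<exists>u. u \<in> V n \<and> infdist (r *\<^sub>R w) (V n) = dist (r *\<^sub>R w) u" for n
  proof -
    have "V n \<noteq> {}" using vec.subspace_0[OF V] by blast
    then show ?thesis using infdist_attains_inf[OF subspace_closed[OF V]] by metis
  qed
  then obtain u where u: "\<And>n. u n \<in> V n" "\<And>n. dist (r *\<^sub>R w) (u n) = infdist (r *\<^sub>R w) (V n)"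
    by metis
  have "(\<lambda>n. infdist (r *\<^sub>R w) (V n)) \<longlonglongrightarrow> 0"
  proof (rule real_tendsto_sandwich[where f = "\<lambda>_. 0" and h = "\<lambda>n. gap L (V n)"])
    show "\<forall>\<^sub>F n in sequentially. infdist (r *\<^sub>R w) (V n) \<le> gap L (V n)"
      using r(2) by (intro always_eventually allI infdist_le_gap vec.subspace_0 V subspace_scaleR L w) simp
  qed (use lim in \<open>simp_all add: subspace_tendsto_def infdist_nonneg\<close>)
  then have "(\<lambda>n. dist (u n) (r *\<^sub>R w)) \<longlonglongrightarrow> 0"
    using u(2) by (simp only: dist_commute)
  then have "u \<longlonglongrightarrow> r *\<^sub>R w" by (rule tendsto_dist_iff[THEN iffD2])
  then have "(\<lambda>n. (1 / r) *\<^sub>R u n) \<longlonglongrightarrow> (1 / r) *\<^sub>R (r *\<^sub>R w)" by (intro tendsto_intros)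
  then show ?thesis using r(1) that[of "\<lambda>n. (1 / r) *\<^sub>R u n"] by (simp add: subspace_scaleR V u(1))
qed

lemma span_line_scale: "c \<noteq> 0 \<Longrightarrow> vec.span {c *s x} = vec.span {x :: complex ^ 'n}"
proof -
  assume c: "c \<noteq> 0"
  have "(\<exists>\<beta>. v = \<beta> *s (c *s x)) \<longleftrightarrow> (\<exists>\<beta>. v = \<beta> *s x)" for v
    using c by (metis vector_smult_assoc nonzero_divide_eq_eq)
  then show ?thesis by (auto simp: vec.span_singleton)
qed

lemma span_pair_scale: "c \<noteq> 0 \<Longrightarrow> vec.span {x, c *s y} = vec.span {x, y :: complex ^ 'n}"
proof -
  assume c: "c \<noteq> 0"
  have "(\<exists>\<alpha> \<beta>. v = \<alpha> *s x + \<beta> *s (c *s y)) \<longleftrightarrow> (\<exists>\<alpha> \<beta>. v = \<alpha> *s x + \<beta> *s y)" for v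
    using c by (metis vector_smult_assoc nonzero_divide_eq_eq)
  then show ?thesis by (auto simp: span_pair)
qed

(* If x has i-th coordinate 1, then w = w_i x for w in span {x}; replacing x by x' moves w
   by at most |x - x'| |w|.  The plane version uses two pivot coordinates i and j. *)
lemma pivot_line_close:
  assumes pivot: "x $ i = 1" and w: "w \<in> vec.span {x :: complex ^ 'n}"
  shows "\<exists>P \<in> vec.span {x'}. dist w P \<le> norm (x - x') * norm w"
proof
  obtain c where "w = c *s x" using w by (auto simp: vec.span_singleton)
  then have diff: "w - w $ i *s x' = w $ i *s (x - x')" using pivot by (simp add: vector_ssub_ldistrib)
  have "dist w (w $ i *s x') = norm (w $ i) * norm (x - x')"
    unfolding dist_norm diff norm_smult_complex ..
  also have "\<dots> \<le> norm w * norm (x - x')"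
    by (rule mult_right_mono[OF Finite_Cartesian_Product.norm_nth_le norm_ge_zero])
  finally show "dist w (w $ i *s x') \<le> norm (x - x') * norm w" by (simp add: mult.commute)
  show "w $ i *s x' \<in> vec.span {x'}" by (simp add: vec.span_base vec.span_scale)
qed

lemma pivot_plane_close:
  assumes pivot: "x $ i = 1" "x $ j = 0" "y $ i = 0" "y $ j = 1"
    and w: "w \<in> vec.span {x, y :: complex ^ 'n}"
  shows "\<exists>P \<in> vec.span {x', y'}. dist w P \<le> (norm (x - x') + norm (y - y')) * norm w"
proof
  obtain \<alpha> \<beta> where "w = \<alpha> *s x + \<beta> *s y" using w by (auto simp: span_pair)
  then have "w = w $ i *s x + w $ j *s y" using pivot by simp
  then have diff: "w - (w $ i *s x' + w $ j *s y') = w $ i *s (x - x') + w $ j *s (y - y')"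
    by (simp add: vector_ssub_ldistrib algebra_simps)
  have "dist w (w $ i *s x' + w $ j *s y') \<le> norm (w $ i *s (x - x')) + norm (w $ j *s (y - y'))"
    unfolding dist_norm diff by (rule norm_triangle_ineq)
  also have "\<dots> = norm (w $ i) * norm (x - x') + norm (w $ j) * norm (y - y')"
    by (simp only: norm_smult_complex)
  also have "\<dots> \<le> norm w * norm (x - x') + norm w * norm (y - y')"
    by (intro add_mono mult_right_mono Finite_Cartesian_Product.norm_nth_le norm_ge_zero)
  finally show "dist w (w $ i *s x' + w $ j *s y') \<le> (norm (x - x') + norm (y - y')) * norm w"
    by (simp add: algebra_simps)
  show "w $ i *s x' + w $ j *s y' \<in> vec.span {x', y'}" by (auto simp: span_pair)
qed

lemma pivot_of_limit:
  fixes b :: "nat \<Rightarrow> complex ^ 'n"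
  assumes "\<And>n. b n $ i = z" "b \<longlonglongrightarrow> c"
  shows "c $ i = z"
proof -
  have "(\<lambda>n. z) \<longlonglongrightarrow> c $ i" using tendsto_vec_nth[OF assms(2), of i] assms(1) by simp
  then show ?thesis by (metis LIMSEQ_const_iff)
qed

lemma subspace_tendsto_line:
  assumes pivot: "\<And>n. b n $ i = 1" and lim: "b \<longlonglongrightarrow> c"
  shows "subspace_tendsto (\<lambda>n. vec.span {b n}) (vec.span {c})"
  unfolding subspace_tendsto_def
proof
  have c: "c $ i = 1" by (rule pivot_of_limit[OF pivot lim])
  have B: "(\<lambda>n. norm (b n - c)) \<longlonglongrightarrow> 0" "(\<lambda>n. norm (c - b n)) \<longlonglongrightarrow> 0"
    using lim by (simp_all add: tendsto_norm_zero_iff LIM_zero_iff tendsto_norm_zero_cancel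
        norm_minus_commute[of c])
  show "(\<lambda>n. gap (vec.span {b n}) (vec.span {c})) \<longlonglongrightarrow> 0"
    by (rule gap_tendsto_zero[OF _ _ pivot_line_close[OF pivot] _ B(1)]) simp_all
  show "(\<lambda>n. gap (vec.span {c}) (vec.span {b n})) \<longlonglongrightarrow> 0"
    by (rule gap_tendsto_zero[OF _ _ pivot_line_close[OF c] _ B(2)]) simp_all
qed

lemma subspace_tendsto_plane:
  assumes pivot: "\<And>n. u n $ i = 1" "\<And>n. u n $ j = 0" "\<And>n. v n $ i = 0" "\<And>n. v n $ j = 1"
    and lim: "u \<longlonglongrightarrow> u0" "v \<longlonglongrightarrow> v0"
  shows "subspace_tendsto (\<lambda>n. vec.span {u n, v n}) (vec.span {u0, v0})"
  unfolding subspace_tendsto_def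
proof
  have pivot0: "u0 $ i = 1" "u0 $ j = 0" "v0 $ i = 0" "v0 $ j = 1"
    using pivot_of_limit pivot lim by metis+
  have "(\<lambda>n. norm (u n - u0)) \<longlonglongrightarrow> 0" "(\<lambda>n. norm (v n - v0)) \<longlonglongrightarrow> 0"
    using lim by (simp_all add: tendsto_norm_zero LIM_zero)
  then have B: "(\<lambda>n. norm (u n - u0) + norm (v n - v0)) \<longlonglongrightarrow> 0"
    "(\<lambda>n. norm (u0 - u n) + norm (v0 - v n)) \<longlonglongrightarrow> 0"
    using tendsto_add by (fastforce simp: norm_minus_commute)+
  show "(\<lambda>n. gap (vec.span {u n, v n}) (vec.span {u0, v0})) \<longlonglongrightarrow> 0"
    by (rule gap_tendsto_zero[OF _ _ pivot_plane_close[OF pivot] _ B(1)]) simp_all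
  show "(\<lambda>n. gap (vec.span {u0, v0}) (vec.span {u n, v n})) \<longlonglongrightarrow> 0"
    by (rule gap_tendsto_zero[OF _ _ pivot_plane_close[OF pivot0] _ B(2)]) simp_all
qed

lemma is_cgrass_line: "x \<noteq> 0 \<Longrightarrow> is_cgrass 1 (vec.span {x})"
  using vec.dim_span_eq_card_independent[of "{x}"] by (simp add: is_cgrass_def)

lemma is_cgrass_plane:
  assumes "x $ i = 1" "x $ j = 0" "y $ i = 0" "y $ j = 1"
  shows "is_cgrass 2 (vec.span {x, y})"
proof -
  have "x \<noteq> y" "y \<noteq> 0" using assms by auto
  moreover have "x \<notin> vec.span {y}" using assms by (auto simp: vec.span_singleton)
  ultimately have "vec.independent {x, y}" by (simp add: vec.independent_insert)
  then show ?thesis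
    using vec.dim_span_eq_card_independent[of "{x, y}"] \<open>x \<noteq> y\<close> by (simp add: is_cgrass_def)
qed

lemma tendsto_zero_of_power:
  assumes "(\<lambda>n. t n ^ k) \<longlonglongrightarrow> (0 :: complex)" "0 < k"
  shows "t \<longlonglongrightarrow> 0"
proof -
  have "(\<lambda>n. root k (norm (t n ^ k))) \<longlonglongrightarrow> root k 0"
    by (intro tendsto_real_root tendsto_norm_zero assms(1))
  moreover have "root k (norm (t n ^ k)) = norm (t n)" for n
    using assms(2) by (simp add: norm_power real_root_power_cancel)
  ultimately show ?thesis by (simp add: tendsto_norm_zero_iff)
qed

(* The (x1,x2)-plane: it contains the singular locus, every limit tangent plane of S contains
   it, and every limit secant of S lies in it. *)
definition coord_plane :: "(complex ^ 4) set" where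
  "coord_plane = {x. x $ 3 = 0 \<and> x $ 4 = 0}"

lemma first_axis_subset_coord_plane: "first_axis \<subseteq> coord_plane"
  by (auto simp: first_axis_def coord_plane_def)

lemma coord_plane_subset:
  assumes "vec.subspace T" "vec4 1 0 0 0 \<in> T" "vec4 0 1 0 0 \<in> T"
  shows "coord_plane \<subseteq> T"
proof
  fix w assume "w \<in> coord_plane"
  then have "w = w $ 1 *s vec4 1 0 0 0 + w $ 2 *s vec4 0 1 0 0"
    by (simp add: coord_plane_def vec_eq_iff forall_4)
  then show "w \<in> T" using assms by (metis vec.subspace_add vec.subspace_scale)
qed

definition S_param :: "complex \<Rightarrow> complex \<Rightarrow> complex ^ 4" where
  "S_param a t = vec4 a (t ^ 4) (a * t ^ 6) (t ^ 7)"

lemma d_a_S_param: "d_a S_param a t = vec4 1 0 (t ^ 6) 0"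
  by (simp add: d_a_def S_param_def vec_eq_iff forall_4)

lemma d_t_S_param: "d_t S_param a t = vec4 0 (4 * t ^ 3) (6 * a * t ^ 5) (7 * t ^ 6)"
  unfolding d_t_def S_param_def
  by (simp add: vec_eq_iff forall_4) (intro conjI DERIV_imp_deriv; auto intro!: derivative_eq_intros)

lemma S_tangent_limit:
  assumes a: "a \<longlonglongrightarrow> 0" and t: "t \<longlonglongrightarrow> 0" "\<And>n. t n \<noteq> 0"
    and T: "vec.subspace T" and lim: "subspace_tendsto (\<lambda>n. tangent_plane S_param (a n) (t n)) T"
  shows "coord_plane \<subseteq> T"
proof (rule coord_plane_subset[OF T])
  have V: "vec.subspace (tangent_plane S_param (a n) (t n))" for n
    by (simp add: tangent_plane_def)
  have tp: "(\<lambda>n. t n ^ k) \<longlonglongrightarrow> 0" if "0 < k" for k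
    using tendsto_power[OF t(1), of k] that by (simp add: zero_power)
  show "vec4 1 0 0 0 \<in> T"
  proof (rule subspace_limit_contains_limits[OF lim T V])
    show "d_a S_param (a n) (t n) \<in> tangent_plane S_param (a n) (t n)" for n
      by (simp add: tangent_plane_def vec.span_base)
    show "(\<lambda>n. d_a S_param (a n) (t n)) \<longlonglongrightarrow> vec4 1 0 0 0"
      unfolding d_a_S_param by (intro tendsto_vec4 tendsto_const tp) simp
  qed
  show "vec4 0 1 0 0 \<in> T"
  proof (rule subspace_limit_contains_limits[OF lim T V])
    show "inverse (4 * t n ^ 3) *s d_t S_param (a n) (t n) \<in> tangent_plane S_param (a n) (t n)" for n
      by (simp add: tangent_plane_def vec.span_base vec.span_scale)
    have "inverse (4 * t n ^ 3) *s d_t S_param (a n) (t n)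
        = vec4 0 1 (3 / 2 * a n * t n ^ 2) (7 / 4 * t n ^ 3)" for n
      using t(2)[of n] unfolding d_t_S_param by (simp add: field_simps eval_nat_numeral)
    moreover have "(\<lambda>n. vec4 0 1 (3 / 2 * a n * t n ^ 2) (7 / 4 * t n ^ 3)) \<longlonglongrightarrow> vec4 0 1 (3 / 2 * 0 * 0) (7 / 4 * 0)"
      by (intro tendsto_vec4 tendsto_intros a tp) simp_all
    ultimately show "(\<lambda>n. inverse (4 * t n ^ 3) *s d_t S_param (a n) (t n)) \<longlonglongrightarrow> vec4 0 1 0 0"
      by simp
  qed
qed

lemma S_secant_limit:
  assumes a: "a \<longlonglongrightarrow> 0" and t: "t \<longlonglongrightarrow> 0" and y: "\<And>n. y n \<in> first_axis"
    and l: "vec.subspace l" and lim: "subspace_tendsto (\<lambda>n. vec.span {S_param (a n) (t n) - y n}) l"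
  shows "l \<subseteq> coord_plane"
proof
  fix w assume "w \<in> l"
  then obtain u where u: "\<And>n. u n \<in> vec.span {S_param (a n) (t n) - y n}" "u \<longlonglongrightarrow> w"
    using subspace_limit_approximable[OF lim l] by blast
  have u34: "u n $ 3 = u n $ 2 * (a n * t n ^ 2)" "u n $ 4 = u n $ 2 * t n ^ 3" for n
  proof -
    obtain c where c: "u n = c *s (S_param (a n) (t n) - y n)"
      using u(1) by (auto simp: vec.span_singleton)
    show "u n $ 3 = u n $ 2 * (a n * t n ^ 2)" "u n $ 4 = u n $ 2 * t n ^ 3"
      using y[of n] unfolding c by (simp_all add: S_param_def first_axis_def eval_nat_numeral algebra_simps)
  qed
  have u2: "(\<lambda>n. u n $ 2) \<longlonglongrightarrow> w $ 2" by (rule tendsto_vec_nth[OF u(2)])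
  have "(\<lambda>n. u n $ 3) \<longlonglongrightarrow> w $ 2 * (0 * 0 ^ 2)" "(\<lambda>n. u n $ 4) \<longlonglongrightarrow> w $ 2 * 0 ^ 3"
    unfolding u34 by (intro tendsto_intros u2 a t)+
  then show "w \<in> coord_plane"
    using tendsto_vec_nth[OF u(2), of 3] tendsto_vec_nth[OF u(2), of 4]
    by (simp add: coord_plane_def LIMSEQ_unique)
qed

(* Whitney regularity of S: the first axis and the limit secant lie in the (x1,x2)-plane,
   which lies in the limit tangent plane. *)
lemma S_whitney_regular: "whitney_regular_at_0 S_param"
  unfolding whitney_regular_at_0_def
proof (intro allI impI)
  fix a t :: "nat \<Rightarrow> complex" and y :: "nat \<Rightarrow> complex ^ 4" and l T
  assume t: "\<forall>n. t n \<noteq> 0" and S: "(\<lambda>n. S_param (a n) (t n)) \<longlonglongrightarrow> 0"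
    and y: "\<forall>n. y n \<in> first_axis - {0}" and l: "is_cgrass 1 l"
    and l_lim: "subspace_tendsto (\<lambda>n. vec.span {S_param (a n) (t n) - y n}) l"
    and T: "is_cgrass 2 T" and T_lim: "subspace_tendsto (\<lambda>n. tangent_plane S_param (a n) (t n)) T"
  have a0: "a \<longlonglongrightarrow> 0" using tendsto_vec_nth[OF S, of 1] by (simp add: S_param_def)
  have "(\<lambda>n. t n ^ 4) \<longlonglongrightarrow> 0" using tendsto_vec_nth[OF S, of 2] by (simp add: S_param_def)
  then have t0: "t \<longlonglongrightarrow> 0" by (rule tendsto_zero_of_power) simp
  have "coord_plane \<subseteq> T"
    using S_tangent_limit[OF a0 t0 _ _ T_lim] t T by (simp add: is_cgrass_def)
  moreover have "l \<subseteq> coord_plane"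
    using S_secant_limit[OF a0 t0 _ _ l_lim] y l by (simp add: is_cgrass_def)
  ultimately show "first_axis \<subseteq> T \<and> l \<subseteq> T" using first_axis_subset_coord_plane by blast
qed

(* The family (a, t^4, p a t^2, q t^3), containing the blow-up (p = q = 1) and the Nash
   modification (p = 3/2, q = 7/4) of S, and its partial derivatives. *)
definition pq_param :: "complex \<Rightarrow> complex \<Rightarrow> complex \<Rightarrow> complex \<Rightarrow> complex ^ 4" where
  "pq_param p q a t = vec4 a (t ^ 4) (p * a * t ^ 2) (q * t ^ 3)"

lemma d_a_pq_param: "d_a (pq_param p q) a t = vec4 1 0 (p * t ^ 2) 0"
  by (simp add: d_a_def pq_param_def vec_eq_iff forall_4)

lemma d_t_pq_param: "d_t (pq_param p q) a t = vec4 0 (4 * t ^ 3) (2 * p * a * t) (3 * q * t ^ 2)"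
  unfolding d_t_def pq_param_def
  by (simp add: vec_eq_iff forall_4) (intro conjI DERIV_imp_deriv; auto intro!: derivative_eq_intros)

(* Along a = t and y = (t,0,0,0), the secant is q t^3 (0, t/q, p/q, 1). *)
lemma pq_secant_tendsto:
  assumes q: "q \<noteq> 0" and t: "t \<longlonglongrightarrow> 0" "\<And>n. t n \<noteq> 0"
  shows "subspace_tendsto (\<lambda>n. vec.span {pq_param p q (t n) (t n) - vec4 (t n) 0 0 0})
           (vec.span {vec4 0 0 (p / q) 1})"
proof -
  have secant: "pq_param p q (t n) (t n) - vec4 (t n) 0 0 0 = (q * t n ^ 3) *s vec4 0 (t n / q) (p / q) 1" for n
    using q by (simp add: pq_param_def vec4_eq_iff eval_nat_numeral)
  have "vec.span {pq_param p q (t n) (t n) - vec4 (t n) 0 0 0} = vec.span {vec4 0 (t n / q) (p / q) 1}" for n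
    using q t(2)[of n] unfolding secant by (intro span_line_scale) simp
  moreover have "subspace_tendsto (\<lambda>n. vec.span {vec4 0 (t n / q) (p / q) 1}) (vec.span {vec4 0 (0 / q) (p / q) 1})"
    using q by (intro subspace_tendsto_line[where i = 4] tendsto_vec4 tendsto_intros t) simp_all
  ultimately show ?thesis by simp
qed

(* Along a = t, the tangent plane is spanned by (1,0,p t^2,0) and (0, 4t/(3q), 2p/(3q), 1). *)
lemma pq_tangent_tendsto:
  assumes q: "q \<noteq> 0" and t: "t \<longlonglongrightarrow> 0" "\<And>n. t n \<noteq> 0"
  shows "subspace_tendsto (\<lambda>n. tangent_plane (pq_param p q) (t n) (t n))
           (vec.span {vec4 1 0 0 0, vec4 0 0 (2 * p / (3 * q)) 1})"
proof -
  have d_t: "d_t (pq_param p q) (t n) (t n) = (3 * q * t n ^ 2) *s vec4 0 (4 * t n / (3 * q)) (2 * p / (3 * q)) 1" for n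
    using q unfolding d_t_pq_param by (simp add: vec4_eq_iff eval_nat_numeral)
  have "tangent_plane (pq_param p q) (t n) (t n)
      = vec.span {vec4 1 0 (p * t n ^ 2) 0, vec4 0 (4 * t n / (3 * q)) (2 * p / (3 * q)) 1}" for n
    using q t(2)[of n] unfolding tangent_plane_def d_a_pq_param d_t by (intro span_pair_scale) simp
  moreover have "subspace_tendsto
      (\<lambda>n. vec.span {vec4 1 0 (p * t n ^ 2) 0, vec4 0 (4 * t n / (3 * q)) (2 * p / (3 * q)) 1})
      (vec.span {vec4 1 0 (p * 0 ^ 2) 0, vec4 0 (4 * 0 / (3 * q)) (2 * p / (3 * q)) 1})"
    using q by (intro subspace_tendsto_plane[where i = 1 and j = 4] tendsto_vec4 tendsto_intros t) simp_all
  ultimately show ?thesis by simp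
qed

(* For p, q nonzero the limit secant (0,0,p/q,1) is not in the limit tangent plane,
   since p/q differs from 2p/(3q). *)
lemma pq_not_whitney_regular:
  assumes p: "p \<noteq> 0" and q: "q \<noteq> 0"
  shows "\<not> whitney_regular_at_0 (pq_param p q)"
proof
  define t :: "nat \<Rightarrow> complex" where "t n = 1 / of_nat (Suc n)" for n
  have t: "t \<longlonglongrightarrow> 0" "\<And>n. t n \<noteq> 0"
    unfolding t_def by (simp_all add: LIMSEQ_Suc[OF lim_1_over_n] del: of_nat_Suc)
  define l where "l = vec.span {vec4 0 0 (p / q) 1}"
  define T where "T = vec.span {vec4 1 0 0 0, vec4 0 0 (2 * p / (3 * q)) 1}"
  assume W: "whitney_regular_at_0 (pq_param p q)"
  have "(\<lambda>n. pq_param p q (t n) (t n)) \<longlonglongrightarrow> vec4 0 (0 ^ 4) (p * 0 * 0 ^ 2) (q * 0 ^ 3)"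
    unfolding pq_param_def by (intro tendsto_vec4 tendsto_intros t)
  then have S_lim: "(\<lambda>n. pq_param p q (t n) (t n)) \<longlonglongrightarrow> 0" by (simp add: vec4_zero)
  have "(\<lambda>n. vec4 (t n) 0 0 0) \<longlonglongrightarrow> vec4 0 0 0 0" by (intro tendsto_vec4 tendsto_const t)
  then have y_lim: "(\<lambda>n. vec4 (t n) 0 0 0) \<longlonglongrightarrow> 0" by (simp add: vec4_zero)
  have y: "\<And>n. vec4 (t n) 0 0 0 \<in> first_axis - {0}"
    using t(2) by (simp add: first_axis_def vec4_zero vec4_eq_iff)
  have l: "is_cgrass 1 l" unfolding l_def by (rule is_cgrass_line) (simp add: vec4_zero vec4_eq_iff)
  have T: "is_cgrass 2 T" unfolding T_def by (rule is_cgrass_plane[where i = 1 and j = 4]) simp_all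
  have "l \<subseteq> T"
    using W[unfolded whitney_regular_at_0_def, rule_format, OF t(2) S_lim y y_lim l
        pq_secant_tendsto[OF q t, of p, folded l_def] T pq_tangent_tendsto[OF q t, of p, folded T_def]]
    by blast
  then have "vec4 0 0 (p / q) 1 \<in> T" by (auto simp: l_def vec.span_base)
  then obtain \<alpha> \<beta> where "vec4 0 0 (p / q) 1 = \<alpha> *s vec4 1 0 0 0 + \<beta> *s vec4 0 0 (2 * p / (3 * q)) 1"
    by (auto simp: T_def span_pair)
  then have "p / q = 2 * p / (3 * q)" by (simp add: vec4_eq_iff)
  then show False using p q by (simp add: field_simps)
qed

theorem mainTheorem11:
  shows "whitney_regular_at_0 (\<lambda>a t. vec4 a (t ^ 4) (a * t ^ 6) (t ^ 7))
       \<and> \<not> whitney_regular_at_0 (\<lambda>a t. vec4 a (t ^ 4) (a * t ^ 2) (t ^ 3))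
       \<and> \<not> whitney_regular_at_0 (\<lambda>a t. vec4 a (t ^ 4) (3 / 2 * a * t ^ 2) (7 / 4 * t ^ 3))"
proof (intro conjI)
  show "whitney_regular_at_0 (\<lambda>a t. vec4 a (t ^ 4) (a * t ^ 6) (t ^ 7))"
    using S_whitney_regular by (simp add: S_param_def [abs_def])
  have "(\<lambda>a t. vec4 a (t ^ 4) (a * t ^ 2) (t ^ 3)) = pq_param 1 1"
    by (simp add: pq_param_def [abs_def])
  then show "\<not> whitney_regular_at_0 (\<lambda>a t. vec4 a (t ^ 4) (a * t ^ 2) (t ^ 3))"
    using pq_not_whitney_regular[of 1 1] by simp
  have "(\<lambda>a t. vec4 a (t ^ 4) (3 / 2 * a * t ^ 2) (7 / 4 * t ^ 3)) = pq_param (3 / 2) (7 / 4)"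
    by (simp add: pq_param_def [abs_def])
  then show "\<not> whitney_regular_at_0 (\<lambda>a t. vec4 a (t ^ 4) (3 / 2 * a * t ^ 2) (7 / 4 * t ^ 3))"
    using pq_not_whitney_regular[of "3 / 2" "7 / 4"] by simp
qed

end
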